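(* Let $n\ge 4$ and $\ell\in\{3,\dots,n-1\}$. For the Grassmannian ${\rm Gr}(3,n)$, there is a sequence of combinatorial mutations taking the polytope $P_{\mathcal{B}_{\ell-1}}$ to $P_{\mathcal{B}_\ell}$.
   Context: For $k=3$: for each $3$-subset $I=\{i_1<i_2<i_3\}$ of $[n]$ a matching field assigns $\sigma=\Lambda(I)\in S_3$; its polytope $P_\Lambda\subset\mathbb{R}^{3\times n}$ is the convex hull of the vectors $\sum_{r=1}^3 e_{\sigma(r),i_r}$ ($e_{i,j}$ the standard basis matrices). For $0\le\ell\le n$, the block diagonal matching field $\mathcal{B}_\ell$ has $\mathcal{B}_\ell(I)=\mathrm{id}$ if $|I\cap\{1,\dots,\ell\}|\ne1$ and $(12)$ otherwise. Combinatorial mutation: with $N\cong\mathbb{Z}^d$, $M$ its dual, $w\in M$ primitive and $F\subset w^\perp\subset N_\mathbb{R}$ a lattice polytope, the tropical map is $\varphi_{w,F}(u)=u-(\min_{f\in F}\langle f,u\rangle)w$; if $P\subset M_\mathbb{R}$ is a lattice polytope containing the origin and $\varphi_{w,F}(P)$ is convex, it is a combinatorial mutation of $P$. A sequence of combinatorial mutations is a finite chain of polytopes in which consecutive polytopes are related, after identification via lattice-preserving affine isomorphisms (unimodular equivalences) of the lattices they span, either by a unimodular equivalence or by a combinatorial mutation. *)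

theory Defs
  imports "HOL-Analysis.Analysis" "HOL-Library.Function_Algebras" "HOL-Combinatorics.Transposition"
begin

text \<open>Vectors are functions nat => real; a vector of R^d is one vanishing outside {..<d}.
  We equip nat => real with its pointwise real vector space structure.\<close>

instantiation "fun" :: (type, real_vector) real_vector
begin
definition scaleR_fun :: "real \<Rightarrow> ('a \<Rightarrow> 'b) \<Rightarrow> 'a \<Rightarrow> 'b" where
  "scaleR_fun c f = (\<lambda>x. c *\<^sub>R f x)"
instance
  by intro_classes (auto simp: scaleR_fun_def fun_eq_iff scaleR_add_right scaleR_add_left)
end

type_synonym rvec = "nat \<Rightarrow> real"

definition in_space :: "nat \<Rightarrow> rvec \<Rightarrow> bool" where
  "in_space d x \<longleftrightarrow> (\<forall>i\<ge>d. x i = 0)"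

definition latt :: "nat \<Rightarrow> rvec set" where
  "latt d = {x. in_space d x \<and> (\<forall>i. x i \<in> \<int>)}"

definition lattice_polytope :: "nat \<Rightarrow> rvec set \<Rightarrow> bool" where
  "lattice_polytope d P \<longleftrightarrow> (\<exists>V. finite V \<and> V \<noteq> {} \<and> V \<subseteq> latt d \<and> P = convex hull V)"

definition pair :: "nat \<Rightarrow> rvec \<Rightarrow> rvec \<Rightarrow> real" where
  "pair d f u = (\<Sum>i<d. f i * u i)"

definition primitive :: "nat \<Rightarrow> rvec \<Rightarrow> bool" where
  "primitive d w \<longleftrightarrow> w \<in> latt d \<and>
     (\<forall>(k::nat) v. v \<in> latt d \<and> w = real k *\<^sub>R v \<longrightarrow> k = 1)"

definition tropical_map :: "nat \<Rightarrow> rvec \<Rightarrow> rvec set \<Rightarrow> rvec \<Rightarrow> rvec" where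
  "tropical_map d w F u = u - (Inf ((\<lambda>f. pair d f u) ` F)) *\<^sub>R w"

definition comb_mutation :: "nat \<Rightarrow> rvec set \<Rightarrow> rvec set \<Rightarrow> bool" where
  "comb_mutation d P Q \<longleftrightarrow> lattice_polytope d P \<and> 0 \<in> P \<and>
     (\<exists>w F. primitive d w \<and> lattice_polytope d F \<and> F \<subseteq> {f. pair d f w = 0} \<and>
            convex (tropical_map d w F ` P) \<and> Q = tropical_map d w F ` P)"

definition spanned_lattice :: "nat \<Rightarrow> rvec set \<Rightarrow> rvec set" where
  "spanned_lattice d P = {x. \<exists>V c. finite V \<and> V \<subseteq> P \<inter> latt d \<and> (\<forall>v\<in>V. c v \<in> \<int>) \<and>
       sum c V = 1 \<and> x = (\<Sum>v\<in>V. c v *\<^sub>R v)}"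

definition unimod_equiv :: "nat \<Rightarrow> rvec set \<Rightarrow> nat \<Rightarrow> rvec set \<Rightarrow> bool" where
  "unimod_equiv d P e Q \<longleftrightarrow> (\<exists>T c. linear T \<and>
      bij_betw (\<lambda>x. T x + c) (spanned_lattice d P) (spanned_lattice e Q) \<and>
      (\<lambda>x. T x + c) ` P = Q)"

text \<open>One step of a sequence of combinatorial mutations; polytopes carry their ambient dimension.\<close>
definition mutation_step :: "nat \<times> rvec set \<Rightarrow> nat \<times> rvec set \<Rightarrow> bool" where
  "mutation_step A B \<longleftrightarrow> (case A of (d, P) \<Rightarrow> case B of (e, Q) \<Rightarrow>
      lattice_polytope d P \<and> lattice_polytope e Q \<and>
      (unimod_equiv d P e Q \<or> (d = e \<and> (comb_mutation d P Q \<or> comb_mutation d Q P))))"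

definition mutation_sequence :: "nat \<times> rvec set \<Rightarrow> nat \<times> rvec set \<Rightarrow> bool" where
  "mutation_sequence A B \<longleftrightarrow> mutation_step\<^sup>*\<^sup>* A B"

text \<open>Coordinate of the matrix unit e_{a,b} (a in {1,2,3}, b in [n]) in R^{3n}.\<close>
definition mat_idx :: "nat \<Rightarrow> nat \<Rightarrow> nat \<Rightarrow> nat" where
  "mat_idx n a b = (a - 1) * n + (b - 1)"

definition mat_unit :: "nat \<Rightarrow> nat \<Rightarrow> nat \<Rightarrow> rvec" where
  "mat_unit n a b = (\<lambda>k. if k = mat_idx n a b then 1 else 0)"

definition three_subsets :: "nat \<Rightarrow> nat set set" where
  "three_subsets n = {I. I \<subseteq> {1..n} \<and> card I = 3}"

definition mf_vertex :: "nat \<Rightarrow> (nat set \<Rightarrow> nat \<Rightarrow> nat) \<Rightarrow> nat set \<Rightarrow> rvec" where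
  "mf_vertex n \<Lambda> I = (\<Sum>r\<in>{1,2,3::nat}. mat_unit n (\<Lambda> I r) (sorted_list_of_set I ! (r - 1)))"

definition matching_field :: "nat \<Rightarrow> (nat set \<Rightarrow> nat \<Rightarrow> nat) \<Rightarrow> bool" where
  "matching_field n \<Lambda> \<longleftrightarrow> (\<forall>I\<in>three_subsets n. \<Lambda> I permutes {1,2,3})"

definition mf_polytope :: "nat \<Rightarrow> (nat set \<Rightarrow> nat \<Rightarrow> nat) \<Rightarrow> rvec set" where
  "mf_polytope n \<Lambda> = convex hull (mf_vertex n \<Lambda> ` three_subsets n)"

definition block_diag :: "nat \<Rightarrow> nat set \<Rightarrow> nat \<Rightarrow> nat" where
  "block_diag l I = (if card (I \<inter> {1..l}) \<noteq> 1 then id else Transposition.transpose (1::nat) 2)"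

end

theory Submission
  imports Defs
begin

text \<open>
  The block orders of B_(l-1) and B_l list [n] as l, l+1, ..., n, 1, ..., l-1 and as
  l+1, ..., n, 1, ..., l, and a 3-subset with maximum c and further elements a, b (a before b
  in the order) gives the vertex e_1a + e_2b + e_3c. We move l past the other elements one
  at a time; a step only changes the vertices with (a, b) = (l, m) into those with (a, b) = (m, l).
  Up to translation, such a step is a single combinatorial mutation with factor the segment
  [0, f], where f is the indicator of the elements preceding l and m (in row 1) and of those
  following them (in row 2): the height 1 - <f, v> takes only the values -1, 0, 1, the vertices
  of height 1 are exactly those that change, and the tropical map adds
  w = e_1m + e_2l - e_1l - e_2m to every point of positive height. It maps the old polytope onto
  the new one because, before and after the step, the midpoint of a vertex of height 1 and a
  vertex of height -1 is also the midpoint of two vertices of height 0, obtained by exchanging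
  their row-1 or their row-2 entries.
\<close>

section \<open>Convex hulls of level sets\<close>

lemma linear_image_convex_hull_subset:
  fixes g :: "'a::real_vector \<Rightarrow> 'b::real_vector"
  assumes "linear g" "convex C" "g ` S \<subseteq> C"
  shows "g ` (convex hull S) \<subseteq> C"
  using assms by (simp add: convex_hull_linear_image hull_minimal)

lemma weighted_sum_in_scaled_convex_hull:
  fixes A :: "'a::real_vector set"
  assumes "finite A" "A \<noteq> {}" "\<And>x. x \<in> A \<Longrightarrow> 0 \<le> lam x"
  obtains s where "s \<in> convex hull A" "(\<Sum>x\<in>A. lam x *\<^sub>R x) = sum lam A *\<^sub>R s"
proof (cases "sum lam A = 0")
  case True
  then have "\<forall>x\<in>A. lam x = 0" using assms sum_nonneg_eq_0_iff by blast
  moreover obtain a where "a \<in> A" using assms by auto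
  ultimately show ?thesis using True that[of a] by (simp add: hull_inc)
next
  case False
  then have pos: "sum lam A > 0" using assms by (simp add: sum_nonneg order_le_neq_trans)
  define s where "s = (1 / sum lam A) *\<^sub>R (\<Sum>x\<in>A. lam x *\<^sub>R x)"
  have "s \<in> convex hull A"
    unfolding convex_hull_finite[OF assms(1)]
  proof (intro CollectI exI[of _ "\<lambda>x. lam x / sum lam A"] conjI)
    show "\<forall>x\<in>A. 0 \<le> lam x / sum lam A" using assms pos by auto
    show "(\<Sum>x\<in>A. lam x / sum lam A) = 1" using pos by (simp flip: sum_divide_distrib)
    show "(\<Sum>x\<in>A. (lam x / sum lam A) *\<^sub>R x) = s"
      by (simp add: s_def scaleR_sum_right divide_inverse_commute)
  qed
  moreover have "(\<Sum>x\<in>A. lam x *\<^sub>R x) = sum lam A *\<^sub>R s" using pos by (simp add: s_def)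
  ultimately show ?thesis using that by blast
qed

lemma convex_hull_Un_disjoint_split:
  fixes S T :: "'a::real_vector set"
  assumes "finite S" "finite T" "S \<inter> T = {}" "S \<noteq> {}" "T \<noteq> {}" "u \<in> convex hull (S \<union> T)"
  obtains a \<sigma> \<tau> where "0 \<le> a" "a \<le> 1" "\<sigma> \<in> convex hull S" "\<tau> \<in> convex hull T"
    "u = a *\<^sub>R \<sigma> + (1 - a) *\<^sub>R \<tau>"
proof -
  obtain lam where lam: "\<forall>x\<in>S \<union> T. 0 \<le> lam x" "sum lam (S \<union> T) = 1"
    "(\<Sum>x\<in>S \<union> T. lam x *\<^sub>R x) = u"
    using assms(6) unfolding convex_hull_finite[OF finite_UnI[OF assms(1,2)]] by auto
  obtain \<sigma> where \<sigma>: "\<sigma> \<in> convex hull S" "(\<Sum>x\<in>S. lam x *\<^sub>R x) = sum lam S *\<^sub>R \<sigma>"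
    using weighted_sum_in_scaled_convex_hull[OF assms(1,4)] lam(1) by blast
  obtain \<tau> where \<tau>: "\<tau> \<in> convex hull T" "(\<Sum>x\<in>T. lam x *\<^sub>R x) = sum lam T *\<^sub>R \<tau>"
    using weighted_sum_in_scaled_convex_hull[OF assms(2,5)] lam(1) by blast
  have split: "sum h (S \<union> T) = sum h S + sum h T" for h :: "'a \<Rightarrow> 'b::comm_monoid_add"
    using assms(1-3) by (rule sum.union_disjoint)
  show ?thesis
  proof (rule that[OF _ _ \<sigma>(1) \<tau>(1)])
    have "0 \<le> sum lam S" "0 \<le> sum lam T" using lam(1) by (auto intro: sum_nonneg)
    then show "0 \<le> sum lam S" "sum lam S \<le> 1" using lam(2) split[of lam] by auto
    show "u = sum lam S *\<^sub>R \<sigma> + (1 - sum lam S) *\<^sub>R \<tau>"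
    proof -
      have "sum lam T = 1 - sum lam S" using lam(2) split[of lam] by simp
      then show ?thesis using lam(3) split[of "\<lambda>x. lam x *\<^sub>R x"] \<sigma>(2) \<tau>(2) by simp
    qed
  qed
qed

lemma convex_hull_Un3_disjoint_split:
  fixes S T Z :: "'a::real_vector set"
  assumes "finite S" "finite T" "finite Z" "S \<inter> T = {}" "(S \<union> T) \<inter> Z = {}"
    and "S \<noteq> {}" "T \<noteq> {}" "Z \<noteq> {}" "u \<in> convex hull (S \<union> T \<union> Z)"
  obtains s t z \<sigma> \<tau> \<zeta> where "0 \<le> s" "0 \<le> t" "0 \<le> z" "s + t + z = 1"
    "\<sigma> \<in> convex hull S" "\<tau> \<in> convex hull T" "\<zeta> \<in> convex hull Z"
    "u = s *\<^sub>R \<sigma> + t *\<^sub>R \<tau> + z *\<^sub>R \<zeta>"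
proof -
  obtain a \<sigma>' \<zeta> where a: "0 \<le> a" "a \<le> 1" and \<sigma>': "\<sigma>' \<in> convex hull (S \<union> T)"
    and \<zeta>: "\<zeta> \<in> convex hull Z" and u: "u = a *\<^sub>R \<sigma>' + (1 - a) *\<^sub>R \<zeta>"
    using convex_hull_Un_disjoint_split[of "S \<union> T" Z] assms by blast
  obtain b \<sigma> \<tau> where b: "0 \<le> b" "b \<le> 1" and \<sigma>: "\<sigma> \<in> convex hull S"
    and \<tau>: "\<tau> \<in> convex hull T" and \<sigma>': "\<sigma>' = b *\<^sub>R \<sigma> + (1 - b) *\<^sub>R \<tau>"
    using convex_hull_Un_disjoint_split[OF assms(1,2,4,6,7) \<sigma>'] by blast
  show ?thesis
  proof (rule that[OF _ _ _ _ \<sigma> \<tau> \<zeta>])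
    show "0 \<le> a * b" "0 \<le> a * (1 - b)" "0 \<le> 1 - a" "a * b + a * (1 - b) + (1 - a) = 1"
      using a b by (simp_all add: algebra_simps mult_left_le)
    show "u = (a * b) *\<^sub>R \<sigma> + (a * (1 - b)) *\<^sub>R \<tau> + (1 - a) *\<^sub>R \<zeta>"
      by (simp add: u \<sigma>' algebra_simps)
  qed
qed

lemma convex_hull_translation_right:
  "convex hull ((\<lambda>x. x + c) ` S) = (\<lambda>x. x + c) ` (convex hull S)"
  using convex_hull_translation[of c S] by (simp add: add.commute)

lemma midpoint_in_convex_hull:
  fixes y y' :: "'a::real_vector"
  shows "y \<in> Z \<Longrightarrow> y' \<in> Z \<Longrightarrow> (1/2) *\<^sub>R (y + y') \<in> convex hull Z"
  using convexD[OF convex_convex_hull hull_inc[of y Z] hull_inc[of y' Z], of "1/2" "1/2"]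
  by (simp add: scaleR_add_right)

lemma midpoint_in_convex_hull_of_hulls:
  fixes S T Z :: "'a::real_vector set"
  assumes "\<And>s t. s \<in> S \<Longrightarrow> t \<in> T \<Longrightarrow> (1/2) *\<^sub>R (s + t) \<in> convex hull Z"
    and "\<sigma> \<in> convex hull S" "\<tau> \<in> convex hull T"
  shows "(1/2) *\<^sub>R (\<sigma> + \<tau>) \<in> convex hull Z"
proof -
  have "\<sigma> + \<tau> \<in> convex hull (S + T)"
    using assms(2,3) by (simp add: convex_hull_set_plus set_plus_intro)
  then have "(1/2) *\<^sub>R (\<sigma> + \<tau>) \<in> convex hull ((\<lambda>x. (1/2) *\<^sub>R x) ` (S + T))"
    by (simp add: convex_hull_scaling)
  also have "\<dots> \<subseteq> convex hull Z"
    using assms(1) by (intro hull_minimal) (auto simp: set_plus_def)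
  finally show ?thesis .
qed

lemma convex_combination_3:
  fixes C :: "'a::real_vector set"
  assumes "convex C" "x \<in> C" "y \<in> C" "z \<in> C" "0 \<le> a" "0 \<le> b" "0 \<le> c" "a + b + c = 1"
  shows "a *\<^sub>R x + b *\<^sub>R y + c *\<^sub>R z \<in> C"
proof -
  have "a *\<^sub>R x + b *\<^sub>R y + c *\<^sub>R z \<in> convex hull {x, y, z}"
    using assms(5-8) by (auto simp: convex_hull_3)
  also have "\<dots> \<subseteq> C" using assms(1-4) by (intro hull_minimal) auto
  finally show ?thesis .
qed

definition level_shift :: "('a \<Rightarrow> real) \<Rightarrow> 'a::plus \<Rightarrow> 'a set \<Rightarrow> 'a set" where
  "level_shift g w V = (\<lambda>v. v + w) ` {v\<in>V. g v = 1} \<union> {v\<in>V. g v \<le> 0}"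

definition balanced_levels :: "('a::real_vector \<Rightarrow> real) \<Rightarrow> 'a set \<Rightarrow> bool" where
  "balanced_levels g V \<longleftrightarrow> (\<forall>v\<in>V. g v \<in> {-1, 0, 1}) \<and>
     (\<forall>v\<in>V. \<forall>v'\<in>V. g v = 1 \<longrightarrow> g v' = -1 \<longrightarrow> (1/2) *\<^sub>R (v + v') \<in> convex hull {z\<in>V. g z = 0})"

lemma shift_in_convex_hull_level_shift_both_levels:
  fixes g :: "'a::real_vector \<Rightarrow> real"
  assumes lin: "linear g" and fin: "finite V" and bal: "balanced_levels g V"
    and top: "{v\<in>V. g v = 1} \<noteq> {}" and bottom: "{v\<in>V. g v = -1} \<noteq> {}"
    and u: "u \<in> convex hull V"
  shows "u + max 0 (g u) *\<^sub>R w \<in> convex hull (level_shift g w V)"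
proof -
  define S T Z where "S = {v\<in>V. g v = 1}" and "T = {v\<in>V. g v = -1}" and "Z = {v\<in>V. g v = 0}"
  have VSTZ: "V = S \<union> T \<union> Z" using bal by (auto simp: S_def T_def Z_def balanced_levels_def)
  have fin: "finite S" "finite T" "finite Z" using fin by (auto simp: S_def T_def Z_def)
  have mid: "(1/2) *\<^sub>R (s + t) \<in> convex hull Z" if "s \<in> S" "t \<in> T" for s t
    using bal that by (simp add: balanced_levels_def S_def T_def Z_def)
  then have "Z \<noteq> {}" using top bottom by (fastforce simp: S_def T_def)
  moreover have "S \<inter> T = {}" "(S \<union> T) \<inter> Z = {}" "S \<noteq> {}" "T \<noteq> {}"
    using top bottom by (auto simp: S_def T_def Z_def)
  moreover have "u \<in> convex hull (S \<union> T \<union> Z)" using u VSTZ by simp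
  ultimately obtain s t z \<sigma> \<tau> \<zeta> where stz: "0 \<le> s" "0 \<le> t" "0 \<le> z" "s + t + z = 1"
    and \<sigma>: "\<sigma> \<in> convex hull S" and \<tau>: "\<tau> \<in> convex hull T" and \<zeta>: "\<zeta> \<in> convex hull Z"
    and u_stz: "u = s *\<^sub>R \<sigma> + t *\<^sub>R \<tau> + z *\<^sub>R \<zeta>"
    using convex_hull_Un3_disjoint_split[OF fin] by metis
  have g_levels: "g \<sigma> = 1" "g \<tau> = -1" "g \<zeta> = 0"
    using linear_image_convex_hull_subset[OF lin convex_singleton, of S 1]
      linear_image_convex_hull_subset[OF lin convex_singleton, of T "-1"]
      linear_image_convex_hull_subset[OF lin convex_singleton, of Z 0] \<sigma> \<tau> \<zeta>
    by (auto simp: S_def T_def Z_def)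
  have "g u = s - t" using g_levels by (simp add: u_stz linear_add[OF lin] linear_scale[OF lin])
  define W where "W = level_shift g w V"
  have "(\<lambda>x. x + w) ` (convex hull S) = convex hull ((\<lambda>x. x + w) ` S)"
    by (rule convex_hull_translation_right[symmetric])
  also have "\<dots> \<subseteq> convex hull W"
    by (rule hull_mono) (auto simp: W_def level_shift_def S_def)
  finally have hulls: "(\<lambda>x. x + w) ` (convex hull S) \<subseteq> convex hull W" .
  have "convex hull T \<subseteq> convex hull W" "convex hull Z \<subseteq> convex hull W"
    by (auto simp: W_def level_shift_def T_def Z_def intro!: hull_mono)
  note hulls = hulls this
  have mid_W: "(1/2) *\<^sub>R (\<sigma> + \<tau>) \<in> convex hull W"
    using midpoint_in_convex_hull_of_hulls[OF mid \<sigma> \<tau>] hulls(3) by auto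
  \<comment> \<open>pair the smaller of the top mass s and the bottom mass t with an equal share of the
    other; the pairs sit at midpoints in the hull of the zero level\<close>
  show ?thesis
  proof (cases "t \<le> s")
    case True
    have "(s - t) *\<^sub>R (\<sigma> + w) + (2 * t) *\<^sub>R ((1/2) *\<^sub>R (\<sigma> + \<tau>)) + z *\<^sub>R \<zeta> \<in> convex hull W"
      using True stz \<sigma> \<zeta> hulls mid_W by (intro convex_combination_3) auto
    moreover have max_eq: "max 0 (g u) = s - t" using True \<open>g u = s - t\<close> by simp
    moreover have "u + max 0 (g u) *\<^sub>R w
        = (s - t) *\<^sub>R (\<sigma> + w) + (2 * t) *\<^sub>R ((1/2) *\<^sub>R (\<sigma> + \<tau>)) + z *\<^sub>R \<zeta>"
      unfolding max_eq by (simp add: u_stz algebra_simps)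
    ultimately show ?thesis by (simp add: W_def)
  next
    case False
    have "(2 * s) *\<^sub>R ((1/2) *\<^sub>R (\<sigma> + \<tau>)) + (t - s) *\<^sub>R \<tau> + z *\<^sub>R \<zeta> \<in> convex hull W"
      using False stz \<tau> \<zeta> hulls mid_W by (intro convex_combination_3) auto
    moreover have max_eq: "max 0 (g u) = 0" using False \<open>g u = s - t\<close> by simp
    moreover have "u + max 0 (g u) *\<^sub>R w
        = (2 * s) *\<^sub>R ((1/2) *\<^sub>R (\<sigma> + \<tau>)) + (t - s) *\<^sub>R \<tau> + z *\<^sub>R \<zeta>"
      unfolding max_eq by (simp add: u_stz algebra_simps)
    ultimately show ?thesis by (simp add: W_def)
  qed
qed

lemma shift_in_convex_hull_level_shift:
  fixes g :: "'a::real_vector \<Rightarrow> real"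
  assumes lin: "linear g" and fin: "finite V" and bal: "balanced_levels g V"
    and u: "u \<in> convex hull V"
  shows "u + max 0 (g u) *\<^sub>R w \<in> convex hull (level_shift g w V)"
proof (cases "{v\<in>V. g v = 1} = {}")
  case True
  then have "g ` V \<subseteq> {..0}" using bal by (force simp: balanced_levels_def)
  then have "g u \<le> 0" using linear_image_convex_hull_subset[OF lin convex_real_interval(2), of V 0] u by auto
  moreover have "V \<subseteq> level_shift g w V"
    using \<open>g ` V \<subseteq> {..0}\<close> by (auto simp: level_shift_def)
  ultimately show ?thesis using u hull_mono by fastforce
next
  case top: False
  show ?thesis
  proof (cases "{v\<in>V. g v = -1} = {}")
    case True
    define L where "L x = x + g x *\<^sub>R w" for x
    have "linear L"
      unfolding L_def
      by (rule linearI) (simp_all add: linear_add[OF lin] linear_scale[OF lin] algebra_simps)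
    have "g ` V \<subseteq> {0..}" using True bal by (force simp: balanced_levels_def)
    then have "g u \<ge> 0" using linear_image_convex_hull_subset[OF lin convex_real_interval(1), of V 0] u by auto
    have "L ` V \<subseteq> level_shift g w V"
      using True bal by (force simp: balanced_levels_def level_shift_def L_def)
    then have "L ` (convex hull V) \<subseteq> convex hull (level_shift g w V)"
      unfolding convex_hull_linear_image[OF \<open>linear L\<close>] by (rule hull_mono)
    then show ?thesis using u \<open>g u \<ge> 0\<close> by (auto simp: L_def)
  next
    case False
    then show ?thesis using shift_in_convex_hull_level_shift_both_levels[OF lin fin bal top _ u] by blast
  qed
qed

lemma level_shift_neg_level_shift:
  fixes g :: "'a::real_vector \<Rightarrow> real"
  assumes "linear g" "g w = 0" "\<forall>v\<in>V. g v \<in> {-1, 0, 1}"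
  shows "level_shift g (- w) (level_shift g w V) = V"
proof -
  have g_shift: "g (v + w) = g v" for v using assms(1,2) by (simp add: linear_add)
  have top: "{x \<in> level_shift g w V. g x = 1} = (\<lambda>v. v + w) ` {v\<in>V. g v = 1}"
    by (auto simp: level_shift_def g_shift)
  have low: "{x \<in> level_shift g w V. g x \<le> 0} = {v\<in>V. g v \<le> 0}"
    by (auto simp: level_shift_def g_shift)
  show ?thesis
    unfolding level_shift_def[of g "- w" "level_shift g w V"] top low image_image
    using assms(3) by auto
qed

lemma image_convex_hull_level_shift:
  fixes g :: "'a::real_vector \<Rightarrow> real"
  assumes lin: "linear g" and gw: "g w = 0" and fin: "finite V"
    and bal: "balanced_levels g V" and bal_shift: "balanced_levels g (level_shift g w V)"
  shows "(\<lambda>u. u + max 0 (g u) *\<^sub>R w) ` (convex hull V) = convex hull (level_shift g w V)"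
proof
  show "(\<lambda>u. u + max 0 (g u) *\<^sub>R w) ` (convex hull V) \<subseteq> convex hull (level_shift g w V)"
    using shift_in_convex_hull_level_shift[OF lin fin bal] by blast
next
  show "convex hull (level_shift g w V) \<subseteq> (\<lambda>u. u + max 0 (g u) *\<^sub>R w) ` (convex hull V)"
  proof
    fix x assume x: "x \<in> convex hull (level_shift g w V)"
    define u where "u = x + max 0 (g x) *\<^sub>R (- w)"
    have "finite (level_shift g w V)" using fin by (simp add: level_shift_def)
    then have "u \<in> convex hull (level_shift g (- w) (level_shift g w V))"
      unfolding u_def by (rule shift_in_convex_hull_level_shift[OF lin _ bal_shift x])
    then have "u \<in> convex hull V"
      using level_shift_neg_level_shift[OF lin gw] bal by (simp add: balanced_levels_def)
    moreover have "g u = g x" using lin gw by (simp add: u_def linear_diff linear_scale)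
    ultimately show "x \<in> (\<lambda>u. u + max 0 (g u) *\<^sub>R w) ` (convex hull V)"
      by (intro image_eqI[of _ _ u]) (auto simp: u_def)
  qed
qed

lemma level_shift_translate:
  fixes g g' :: "'a::real_vector \<Rightarrow> real"
  assumes "\<And>v. g' (v + c) = g v"
  shows "level_shift g' w ((\<lambda>v. v + c) ` V) = (\<lambda>v. v + c) ` level_shift g w V"
proof -
  have "{x \<in> (\<lambda>v. v + c) ` V. g' x = 1} = (\<lambda>v. v + c) ` {v\<in>V. g v = 1}"
    "{x \<in> (\<lambda>v. v + c) ` V. g' x \<le> 0} = (\<lambda>v. v + c) ` {v\<in>V. g v \<le> 0}"
    by (auto simp: assms)
  moreover have "(\<lambda>v. v + w) ` (\<lambda>v. v + c) ` A = (\<lambda>v. v + c) ` (\<lambda>v. v + w) ` A" for A :: "'a set"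
    by (simp add: image_image add_ac)
  ultimately show ?thesis by (simp add: level_shift_def image_Un)
qed

lemma balanced_levels_translate:
  fixes g g' :: "'a::real_vector \<Rightarrow> real"
  assumes g': "\<And>v. g' (v + c) = g v" and bal: "balanced_levels g V"
  shows "balanced_levels g' ((\<lambda>v. v + c) ` V)"
proof -
  have zero_level: "{z \<in> (\<lambda>v. v + c) ` V. g' z = 0} = (\<lambda>v. v + c) ` {z\<in>V. g z = 0}"
    by (auto simp: g')
  have "(1/2) *\<^sub>R ((v + c) + (v' + c)) \<in> (\<lambda>x. x + c) ` (convex hull {z\<in>V. g z = 0})"
    if "v \<in> V" "v' \<in> V" "g v = 1" "g v' = -1" for v v'
  proof -
    have "(1/2) *\<^sub>R ((v + c) + (v' + c)) = (1/2) *\<^sub>R (v + v') + c"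
      by (simp add: algebra_simps flip: scaleR_2)
    then show ?thesis using bal that by (simp add: balanced_levels_def)
  qed
  then show ?thesis
    using bal by (auto simp: balanced_levels_def zero_level g' convex_hull_translation_right)
qed

section \<open>Combinatorial mutations with a segment factor\<close>

lemma scaleR_fun_apply [simp]: "(c *\<^sub>R f) x = c *\<^sub>R f x"
  by (simp add: scaleR_fun_def)

lemma latt_zero: "0 \<in> latt d"
  and latt_add: "x \<in> latt d \<Longrightarrow> y \<in> latt d \<Longrightarrow> x + y \<in> latt d"
  and latt_uminus: "x \<in> latt d \<Longrightarrow> - x \<in> latt d"
  and latt_diff: "x \<in> latt d \<Longrightarrow> y \<in> latt d \<Longrightarrow> x - y \<in> latt d"
  by (auto simp: latt_def in_space_def)

lemma linear_pair: "linear (pair d f)"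
  by (rule linearI) (simp_all add: pair_def distrib_left sum.distrib sum_distrib_left mult.left_commute)

lemma linear_pair_left: "linear (\<lambda>f. pair d f u)"
  by (rule linearI) (simp_all add: pair_def distrib_right sum.distrib sum_distrib_left mult.assoc)

lemmas pair_add = linear_add[OF linear_pair]
  and pair_diff = linear_diff[OF linear_pair]

lemma lattice_polytope_convex_hull:
  "finite V \<Longrightarrow> V \<noteq> {} \<Longrightarrow> V \<subseteq> latt d \<Longrightarrow> lattice_polytope d (convex hull V)"
  unfolding lattice_polytope_def by blast

lemma primitive_if_coordinate_one:
  assumes "w \<in> latt d" "w i = 1"
  shows "primitive d w"
  unfolding primitive_def
proof (intro conjI assms allI impI)
  fix k :: nat and v assume kv: "v \<in> latt d \<and> w = real k *\<^sub>R v"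
  then obtain m where "v i = of_int m" by (auto simp: latt_def elim: Ints_cases)
  with kv assms(2) have "int k * m = 1"
    by (metis of_int_eq_1_iff of_int_mult of_int_of_nat_eq real_scaleR_def scaleR_fun_apply)
  then show "k = 1" by (auto simp: zmult_eq_1_iff)
qed

lemma spanned_lattice_translate_subset:
  assumes "c \<in> latt d"
  shows "(\<lambda>x. x + c) ` spanned_lattice d P \<subseteq> spanned_lattice d ((\<lambda>x. x + c) ` P)"
proof
  fix y assume "y \<in> (\<lambda>x. x + c) ` spanned_lattice d P"
  then obtain V coef where y: "y = (\<Sum>v\<in>V. coef v *\<^sub>R v) + c" and V: "finite V" "V \<subseteq> P \<inter> latt d"
    and coef: "\<forall>v\<in>V. coef v \<in> \<int>" "sum coef V = 1"
    unfolding spanned_lattice_def by blast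
  have inj: "inj_on (\<lambda>v. v + c) V" by (auto simp: inj_on_def)
  let ?V' = "(\<lambda>v. v + c) ` V" and ?coef' = "\<lambda>v. coef (v - c)"
  have "(\<Sum>v\<in>?V'. ?coef' v *\<^sub>R v) = (\<Sum>v\<in>V. coef v *\<^sub>R v) + sum coef V *\<^sub>R c"
    by (simp add: sum.reindex[OF inj] scaleR_add_right sum.distrib scaleR_sum_left)
  then have "y = (\<Sum>v\<in>?V'. ?coef' v *\<^sub>R v)" using y coef by simp
  moreover have "?V' \<subseteq> (\<lambda>x. x + c) ` P \<inter> latt d" using V assms by (auto intro: latt_add)
  moreover have "sum ?coef' ?V' = 1" using coef by (simp add: sum.reindex[OF inj])
  ultimately show "y \<in> spanned_lattice d ((\<lambda>x. x + c) ` P)"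
    unfolding spanned_lattice_def using V coef by (auto intro!: exI[of _ ?V'] exI[of _ ?coef'])
qed

lemma spanned_lattice_translate:
  assumes "c \<in> latt d"
  shows "spanned_lattice d ((\<lambda>x. x + c) ` P) = (\<lambda>x. x + c) ` spanned_lattice d P"
proof
  show "(\<lambda>x. x + c) ` spanned_lattice d P \<subseteq> spanned_lattice d ((\<lambda>x. x + c) ` P)"
    using assms by (rule spanned_lattice_translate_subset)
  have "(\<lambda>x. x + - c) ` spanned_lattice d ((\<lambda>x. x + c) ` P) \<subseteq> spanned_lattice d P"
    using spanned_lattice_translate_subset[OF latt_uminus[OF assms], of "(\<lambda>x. x + c) ` P"]
    by (simp add: image_image)
  then show "spanned_lattice d ((\<lambda>x. x + c) ` P) \<subseteq> (\<lambda>x. x + c) ` spanned_lattice d P"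
    by (force simp: image_iff)
qed

lemma mutation_step_translate:
  assumes "finite V" "V \<noteq> {}" "V \<subseteq> latt d" "c \<in> latt d"
  shows "mutation_step (d, convex hull V) (d, convex hull ((\<lambda>x. x + c) ` V))"
proof -
  have "unimod_equiv d (convex hull V) d (convex hull ((\<lambda>x. x + c) ` V))"
    unfolding unimod_equiv_def convex_hull_translation_right spanned_lattice_translate[OF assms(4)]
    by (intro exI[of _ id] exI[of _ c] conjI linear_id) (auto simp: inj_on_def bij_betw_def)
  then show ?thesis
    using assms by (auto simp: mutation_step_def intro: lattice_polytope_convex_hull latt_add)
qed

lemma Inf_pair_segment:
  "Inf ((\<lambda>f'. pair d f' u) ` (convex hull {0, f})) = min 0 (pair d f u)"
proof -
  have "convex hull {0, f} = (\<lambda>t. t *\<^sub>R f) ` {0..1}"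
    unfolding segment_convex_hull[symmetric] closed_segment_def by auto
  then have pair_values: "(\<lambda>f'. pair d f' u) ` (convex hull {0, f}) = (\<lambda>t. t * pair d f u) ` {0..1}"
    by (simp add: image_image linear_scale[OF linear_pair_left])
  show ?thesis unfolding pair_values
  proof (rule cInf_eq_minimum)
    show "min 0 (pair d f u) \<in> (\<lambda>t. t * pair d f u) ` {0..1}"
      by (cases "0 \<le> pair d f u") (force simp: min_def)+
    fix x assume "x \<in> (\<lambda>t. t * pair d f u) ` {0..1}"
    then obtain t where "0 \<le> t" "t \<le> 1" "x = t * pair d f u" by auto
    then show "min 0 (pair d f u) \<le> x"
      by (cases "0 \<le> pair d f u") (auto simp: mult_left_le_one_le mult_le_cancel_right1 min_def)
  qed
qed

lemma tropical_map_segment: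
  "tropical_map d w (convex hull {0, f}) u = u + max 0 (- pair d f u) *\<^sub>R w"
  unfolding tropical_map_def Inf_pair_segment by (simp add: min_def max_def)

lemma comb_mutation_level_shift:
  fixes d :: nat and f w :: rvec and g :: "rvec \<Rightarrow> real"
  defines "g \<equiv> \<lambda>u. - pair d f u"
  assumes fin: "finite V" and V_latt: "V \<subseteq> latt d" and "0 \<in> V"
    and f: "f \<in> latt d" "pair d f w = 0" and w: "primitive d w"
    and bal: "balanced_levels g V" "balanced_levels g (level_shift g w V)"
  shows "comb_mutation d (convex hull V) (convex hull (level_shift g w V))"
  unfolding comb_mutation_def
proof (intro conjI exI[of _ w] exI[of _ "convex hull {0, f}"])
  show "lattice_polytope d (convex hull V)"
    using fin V_latt \<open>0 \<in> V\<close> by (intro lattice_polytope_convex_hull) auto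
  show "lattice_polytope d (convex hull {0, f})"
    using f by (intro lattice_polytope_convex_hull) (auto intro: latt_zero)
  show "convex hull {0, f} \<subseteq> {f'. pair d f' w = 0}"
    using linear_image_convex_hull_subset[OF linear_pair_left[where d=d and u=w] convex_singleton[of 0],
        where S="{0, f}"] f
    by (auto simp: linear_0[OF linear_pair_left])
  have "linear g" unfolding g_def using linear_pair by (rule linear_compose_neg)
  moreover have "g w = 0" using f(2) by (simp add: g_def)
  ultimately have "(\<lambda>u. u + max 0 (g u) *\<^sub>R w) ` (convex hull V) = convex hull (level_shift g w V)"
    using image_convex_hull_level_shift fin bal by blast
  then have image: "tropical_map d w (convex hull {0, f}) ` (convex hull V) = convex hull (level_shift g w V)"
    by (simp add: tropical_map_segment g_def)
  then show "convex (tropical_map d w (convex hull {0, f}) ` (convex hull V))" by simp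
  show "convex hull (level_shift g w V) = tropical_map d w (convex hull {0, f}) ` (convex hull V)"
    using image by simp
qed (use \<open>0 \<in> V\<close> w in \<open>auto intro: hull_inc\<close>)

lemma mutation_sequence_level_shift:
  assumes fin: "finite V" and V_latt: "V \<subseteq> latt d" and base: "base \<in> V"
    and f: "f \<in> latt d" "pair d f w = 0" and w: "primitive d w"
    and g: "\<And>u. g u = r - pair d f u" "g base = 0"
    and bal: "balanced_levels g V" "balanced_levels g (level_shift g w V)"
  shows "mutation_sequence (d, convex hull V) (d, convex hull (level_shift g w V))"
proof -
  define c where "c = - base"
  define W where "W = level_shift g w V"
  let ?g' = "\<lambda>u. - pair d f u" and ?V' = "(\<lambda>x. x + c) ` V" and ?W' = "(\<lambda>x. x + c) ` W"
  have g'_translate: "?g' (v + c) = g v" for v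
    using g by (simp add: c_def pair_add pair_diff linear_neg[OF linear_pair])
  have c: "c \<in> latt d" "- c \<in> latt d" using base V_latt by (auto simp: c_def intro: latt_uminus)
  have "w \<in> latt d" using w by (simp add: primitive_def)
  have V': "finite ?V'" "?V' \<subseteq> latt d" "0 \<in> ?V'"
    using fin V_latt c base by (auto simp: c_def image_iff intro: latt_diff)
  have W: "finite W" "W \<noteq> {}" "W \<subseteq> latt d"
    using fin base g(2) V_latt \<open>w \<in> latt d\<close> by (auto simp: W_def level_shift_def intro: latt_add)
  have shift_W': "level_shift ?g' w ?V' = ?W'"
    unfolding W_def by (rule level_shift_translate[of ?g' c g, OF g'_translate])
  have "comb_mutation d (convex hull ?V') (convex hull (level_shift ?g' w ?V'))"
    using V' f w balanced_levels_translate[of ?g' c g, OF g'_translate] bal shift_W'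
    by (intro comb_mutation_level_shift) (simp_all add: W_def)
  then have mutate: "mutation_step (d, convex hull ?V') (d, convex hull ?W')"
    using V' W c shift_W' by (auto simp: mutation_step_def intro!: lattice_polytope_convex_hull latt_add)
  have translate: "mutation_step (d, convex hull V) (d, convex hull ?V')"
    using mutation_step_translate[OF fin _ V_latt c(1)] base by blast
  have "(\<lambda>x. x + - c) ` ?W' = W" by (simp add: image_image)
  then have translate_back: "mutation_step (d, convex hull ?W') (d, convex hull W)"
    using mutation_step_translate[of ?W' d "- c"] W c by (auto intro: latt_add)
  show ?thesis
    unfolding mutation_sequence_def W_def[symmetric] using translate mutate translate_back
    by (meson rtranclp.rtrancl_into_rtrancl r_into_rtranclp)
qed

section \<open>Vertices of block diagonal matching field polytopes\<close>

lemma mat_idx_less: "r \<in> {1,2,3} \<Longrightarrow> x \<in> {1..n} \<Longrightarrow> mat_idx n r x < 3 * n"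
  by (auto simp: mat_idx_def)

lemma mat_idx_eq_iff:
  "r \<in> {1,2,3} \<Longrightarrow> r' \<in> {1,2,3} \<Longrightarrow> x \<in> {1..n} \<Longrightarrow> y \<in> {1..n} \<Longrightarrow>
    mat_idx n r x = mat_idx n r' y \<longleftrightarrow> r = r' \<and> x = y"
  by (auto simp: mat_idx_def)

lemma mat_unit_mat_idx:
  "r \<in> {1,2,3} \<Longrightarrow> r' \<in> {1,2,3} \<Longrightarrow> x \<in> {1..n} \<Longrightarrow> y \<in> {1..n} \<Longrightarrow>
    mat_unit n r x (mat_idx n r' y) = (if r = r' \<and> x = y then 1 else 0)"
  by (auto simp: mat_unit_def mat_idx_eq_iff)

lemma mat_unit_latt: "r \<in> {1,2,3} \<Longrightarrow> x \<in> {1..n} \<Longrightarrow> mat_unit n r x \<in> latt (3 * n)"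
  using mat_idx_less[of r x n] by (auto simp: latt_def in_space_def mat_unit_def)

lemma pair_mat_unit:
  assumes "r \<in> {1,2,3}" "x \<in> {1..n}"
  shows "pair (3 * n) f (mat_unit n r x) = f (mat_idx n r x)"
  using mat_idx_less[OF assms]
  by (simp add: pair_def mat_unit_def if_distrib[of "\<lambda>y. f _ * y"] sum.delta' cong: if_cong)

definition triple_vertex :: "nat \<Rightarrow> nat \<Rightarrow> nat \<Rightarrow> nat \<Rightarrow> rvec" where
  "triple_vertex n a b c = mat_unit n 1 a + mat_unit n 2 b + mat_unit n 3 c"

lemma triple_vertex_latt:
  "a \<in> {1..n} \<Longrightarrow> b \<in> {1..n} \<Longrightarrow> c \<in> {1..n} \<Longrightarrow> triple_vertex n a b c \<in> latt (3 * n)"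
  unfolding triple_vertex_def by (intro latt_add mat_unit_latt) auto

definition row_indicator :: "nat \<Rightarrow> nat set \<Rightarrow> nat set \<Rightarrow> rvec" where
  "row_indicator n A B = (\<lambda>i. if i < n then (if Suc i \<in> A then 1 else 0)
     else if i < 2 * n then (if Suc (i - n) \<in> B then 1 else 0) else 0)"

lemma row_indicator_latt: "row_indicator n A B \<in> latt (3 * n)"
  by (auto simp: latt_def in_space_def row_indicator_def)

lemma row_indicator_mat_idx:
  assumes "x \<in> {1..n}"
  shows "row_indicator n A B (mat_idx n 1 x) = (if x \<in> A then 1 else 0)"
    "row_indicator n A B (mat_idx n 2 x) = (if x \<in> B then 1 else 0)"
    "row_indicator n A B (mat_idx n 3 x) = 0"
  using assms by (auto simp: row_indicator_def mat_idx_def)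

lemma pair_row_indicator_triple_vertex:
  assumes "a \<in> {1..n}" "b \<in> {1..n}" "c \<in> {1..n}"
  shows "pair (3 * n) (row_indicator n A B) (triple_vertex n a b c)
    = (if a \<in> A then 1 else 0) + (if b \<in> B then 1 else 0)"
  using assms by (simp add: triple_vertex_def pair_add pair_mat_unit row_indicator_mat_idx[simplified])

definition ordered_vertices :: "nat \<Rightarrow> (nat \<Rightarrow> 'a::linorder) \<Rightarrow> rvec set" where
  "ordered_vertices n pos = {triple_vertex n a b c | a b c.
     a \<in> {1..n} \<and> b \<in> {1..n} \<and> c \<in> {1..n} \<and> pos a < pos b \<and> a < c \<and> b < c}"

lemma ordered_verticesE:
  assumes "v \<in> ordered_vertices n pos"
  obtains a b c where "v = triple_vertex n a b c" "a \<in> {1..n}" "b \<in> {1..n}" "c \<in> {1..n}"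
    "pos a < pos b" "a < c" "b < c"
  using assms unfolding ordered_vertices_def by blast

lemma triple_vertex_in_ordered_vertices:
  "a \<in> {1..n} \<Longrightarrow> b \<in> {1..n} \<Longrightarrow> c \<in> {1..n} \<Longrightarrow> pos a < pos b \<Longrightarrow> a < c \<Longrightarrow> b < c \<Longrightarrow>
    triple_vertex n a b c \<in> ordered_vertices n pos"
  unfolding ordered_vertices_def by blast

lemma ordered_vertices_finite: "finite (ordered_vertices n pos)"
proof -
  have "ordered_vertices n pos \<subseteq> (\<lambda>(a, b, c). triple_vertex n a b c) ` ({1..n} \<times> {1..n} \<times> {1..n})"
  proof
    fix x assume "x \<in> ordered_vertices n pos"
    then obtain a b c where "x = triple_vertex n a b c" "a \<in> {1..n}" "b \<in> {1..n}" "c \<in> {1..n}"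
      unfolding ordered_vertices_def by blast
    then show "x \<in> (\<lambda>(a, b, c). triple_vertex n a b c) ` ({1..n} \<times> {1..n} \<times> {1..n})"
      by (intro image_eqI[of _ _ "(a, b, c)"]) auto
  qed
  then show ?thesis by (rule finite_subset) auto
qed

lemma ordered_vertices_latt: "ordered_vertices n pos \<subseteq> latt (3 * n)"
  by (auto simp: ordered_vertices_def intro!: triple_vertex_latt)

lemma ordered_vertices_cong:
  assumes "\<And>a b. a \<in> {1..n} \<Longrightarrow> b \<in> {1..n} \<Longrightarrow> pos a < pos b \<longleftrightarrow> pos' a < pos' b"
  shows "ordered_vertices n pos = ordered_vertices n pos'"
  unfolding ordered_vertices_def using assms by blast

lemma three_subsetsE:
  assumes "I \<in> three_subsets n"
  obtains p q r where "I = {p, q, r}" "1 \<le> p" "p < q" "q < r" "r \<le> n"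
proof -
  have "finite I" "I \<subseteq> {1..n}" "card I = 3"
    using assms by (auto simp: three_subsets_def intro: finite_subset)
  define xs where "xs = sorted_list_of_set I"
  have "length xs = 3" using \<open>card I = 3\<close> by (simp add: xs_def)
  then obtain p q r where "xs = [p, q, r]" by (auto simp: length_Suc_conv numeral_3_eq_3)
  moreover have "sorted_wrt (<) xs" "set xs = I"
    using \<open>finite I\<close> by (simp_all add: xs_def strict_sorted_list_of_set)
  ultimately show ?thesis using \<open>I \<subseteq> {1..n}\<close> that by auto
qed

lemma sorted_list_of_set_3: "(p::nat) < q \<Longrightarrow> q < r \<Longrightarrow> sorted_list_of_set {p, q, r} = [p, q, r]"
  by (simp add: sorted_list_of_set_sort_remdups sorted_sort_id)

lemma card_block_eq_1_iff:
  assumes "1 \<le> p" "p < q" "q < (r::nat)"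
  shows "card ({p, q, r} \<inter> {1..K}) = 1 \<longleftrightarrow> p \<le> K \<and> K < q"
proof -
  consider "K < p" | "p \<le> K" "K < q" | "q \<le> K" by linarith
  then show ?thesis
  proof cases
    case 1
    then have "{p, q, r} \<inter> {1..K} = {}" using assms by auto
    then show ?thesis using 1 by simp
  next
    case 2
    then have "{p, q, r} \<inter> {1..K} = {p}" using assms by auto
    then show ?thesis using 2 by simp
  next
    case 3
    then have "card {p, q} \<le> card ({p, q, r} \<inter> {1..K})" using assms by (intro card_mono) auto
    then show ?thesis using 3 assms by simp
  qed
qed

lemma mf_vertex_block_diag:
  assumes "1 \<le> p" "p < q" "q < r"
  shows "mf_vertex n (block_diag K) {p, q, r}
    = (if p \<le> K \<and> K < q then triple_vertex n q p r else triple_vertex n p q r)"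
proof -
  have "mf_vertex n (block_diag K) {p, q, r} = mat_unit n (block_diag K {p, q, r} 1) p
      + mat_unit n (block_diag K {p, q, r} 2) q + mat_unit n (block_diag K {p, q, r} 3) r"
    using assms by (simp add: mf_vertex_def sorted_list_of_set_3 add_ac)
  then show ?thesis
    using card_block_eq_1_iff[OF assms, of K]
    by (auto simp: block_diag_def triple_vertex_def transpose_def add_ac)
qed

definition block_order :: "nat \<Rightarrow> nat \<Rightarrow> nat \<Rightarrow> nat" where
  "block_order n K x = (if x \<le> K then x + n else x)"

lemma mf_vertices_block_diag:
  "mf_vertex n (block_diag K) ` three_subsets n = ordered_vertices n (block_order n K)"
proof (intro equalityI subsetI)
  fix x assume "x \<in> mf_vertex n (block_diag K) ` three_subsets n"
  then obtain p q r where x: "x = mf_vertex n (block_diag K) {p, q, r}"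
    and pqr: "1 \<le> p" "p < q" "q < r" "r \<le> n"
    by (auto elim: three_subsetsE)
  show "x \<in> ordered_vertices n (block_order n K)"
  proof (cases "p \<le> K \<and> K < q")
    case True
    then have "x = triple_vertex n q p r" "block_order n K q < block_order n K p"
      using x pqr mf_vertex_block_diag[OF pqr(1-3)] by (auto simp: block_order_def)
    then show ?thesis using pqr unfolding ordered_vertices_def by fastforce
  next
    case False
    then have "x = triple_vertex n p q r" "block_order n K p < block_order n K q"
      using x pqr mf_vertex_block_diag[OF pqr(1-3)] by (auto simp: block_order_def)
    then show ?thesis using pqr unfolding ordered_vertices_def by fastforce
  qed
next
  fix x assume "x \<in> ordered_vertices n (block_order n K)"
  then obtain a b c where x: "x = triple_vertex n a b c" and abc: "a \<in> {1..n}" "b \<in> {1..n}" "c \<in> {1..n}"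
    "block_order n K a < block_order n K b" "a < c" "b < c"
    unfolding ordered_vertices_def by blast
  have "a \<noteq> b" using abc(4) by auto
  then have I: "{a, b, c} \<in> three_subsets n" using abc by (auto simp: three_subsets_def card_insert_if)
  show "x \<in> mf_vertex n (block_diag K) ` three_subsets n"
  proof (cases "a < b")
    case True
    then have "mf_vertex n (block_diag K) {a, b, c} = x"
      using mf_vertex_block_diag[of a b c n K] abc x by (auto simp: block_order_def split: if_splits)
    then show ?thesis using I by blast
  next
    case False
    then have "b < a" using \<open>a \<noteq> b\<close> by simp
    then have "mf_vertex n (block_diag K) {b, a, c} = x"
      using mf_vertex_block_diag[of b a c n K] abc x by (auto simp: block_order_def split: if_splits)
    then show ?thesis using I by (metis image_eqI insert_commute)
  qed
qed

section \<open>Moving l through the cyclic order\<close>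

lemma triple_vertex_exchange:
  "triple_vertex n a b c + triple_vertex n a' b' c' = triple_vertex n a' b c + triple_vertex n a b' c'"
  "triple_vertex n a b c + triple_vertex n a' b' c' = triple_vertex n a' b c' + triple_vertex n a b' c"
  by (simp_all add: triple_vertex_def algebra_simps)

locale block_interpolation =
  fixes n l :: nat
  assumes four_le_n: "4 \<le> n" and three_le_l: "3 \<le> l" and l_le: "l \<le> n - 1"
begin

definition cyclic_rank :: "nat \<Rightarrow> nat" where
  "cyclic_rank x = (if l < x then x - l else x + n - l)"

text \<open>Only comparisons matter: l sits between the elements of cyclic rank j and j + 1,
  so j = 0 and j = n - 1 give the block orders of B_(l-1) and B_l.\<close>

definition interp_order :: "nat \<Rightarrow> nat \<Rightarrow> nat" where
  "interp_order j x = (if x = l then 2 * j + 1 else 2 * cyclic_rank x)"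

definition partner :: "nat \<Rightarrow> nat" where
  "partner j = (if j + 1 \<le> n - l then j + 1 + l else j + 1 + l - n)"

definition preceding :: "nat \<Rightarrow> nat set" where
  "preceding j = {x. x \<noteq> l \<and> cyclic_rank x \<le> j}"

definition following :: "nat \<Rightarrow> nat set" where
  "following j = {x. x \<noteq> l \<and> j + 2 \<le> cyclic_rank x}"

definition height :: "nat \<Rightarrow> rvec \<Rightarrow> real" where
  "height j v = 1 - pair (3 * n) (row_indicator n (preceding j) (following j)) v"

definition swap_direction :: "nat \<Rightarrow> rvec" where
  "swap_direction j = mat_unit n 1 (partner j) + mat_unit n 2 l - mat_unit n 1 l - mat_unit n 2 (partner j)"

lemma l_range: "l \<in> {1..n}"
  using three_le_l l_le by auto

lemma partner_spec:
  assumes "j < n - 1"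
  shows "partner j \<in> {1..n}" "partner j \<noteq> l" "cyclic_rank (partner j) = j + 1"
  using assms l_le three_le_l by (auto simp: partner_def cyclic_rank_def)

lemma cyclic_rank_inj:
  "x \<in> {1..n} \<Longrightarrow> y \<in> {1..n} \<Longrightarrow> x \<noteq> l \<Longrightarrow> y \<noteq> l \<Longrightarrow> cyclic_rank x = cyclic_rank y \<Longrightarrow> x = y"
  using l_le by (auto simp: cyclic_rank_def split: if_splits)

lemma height_triple_vertex:
  assumes "a \<in> {1..n}" "b \<in> {1..n}" "c \<in> {1..n}"
  shows "height j (triple_vertex n a b c)
    = 1 - (if a \<in> preceding j then 1 else 0) - (if b \<in> following j then 1 else 0)"
  using assms by (simp add: height_def pair_row_indicator_triple_vertex)

lemma interp_order_Suc_less_iff: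
  assumes j: "j < n - 1" and xy: "x \<in> {1..n}" "y \<in> {1..n}"
  shows "interp_order (Suc j) x < interp_order (Suc j) y \<longleftrightarrow>
    (interp_order j x < interp_order j y \<and> \<not> (x = l \<and> y = partner j)) \<or> (x = partner j \<and> y = l)"
proof -
  have "cyclic_rank x \<noteq> j + 1" if "x \<noteq> l" "x \<noteq> partner j"
    using cyclic_rank_inj[OF xy(1) partner_spec(1)[OF j]] partner_spec[OF j] that by auto
  moreover have "cyclic_rank y \<noteq> j + 1" if "y \<noteq> l" "y \<noteq> partner j"
    using cyclic_rank_inj[OF xy(2) partner_spec(1)[OF j]] partner_spec[OF j] that by auto
  ultimately show ?thesis using partner_spec[OF j] by (auto simp: interp_order_def)
qed

lemma preceding_following_order:
  assumes "j < n - 1" "i \<in> {j, Suc j}" and "p \<in> {l, partner j}"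
  shows "a \<in> preceding j \<Longrightarrow> interp_order i a < interp_order i p"
    and "b \<in> following j \<Longrightarrow> interp_order i p < interp_order i b"
  using assms partner_spec[OF assms(1)] by (auto simp: interp_order_def preceding_def following_def)

lemma top_level_pair:
  assumes j: "j < n - 1" and i: "i \<in> {j, Suc j}" and ab: "a \<in> {1..n}" "b \<in> {1..n}"
    and less: "interp_order i a < interp_order i b"
    and "a \<notin> preceding j" "b \<notin> following j"
  shows "(a = l \<and> b = partner j) \<or> (a = partner j \<and> b = l)"
proof -
  have "(a = l \<and> b \<noteq> l \<and> cyclic_rank b = j + 1) \<or> (b = l \<and> a \<noteq> l \<and> cyclic_rank a = j + 1)"
    using assms by (auto simp: interp_order_def preceding_def following_def split: if_splits)
  then show ?thesis
    using cyclic_rank_inj[OF ab(1) partner_spec(1)[OF j]] cyclic_rank_inj[OF ab(2) partner_spec(1)[OF j]]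
      partner_spec[OF j] by auto
qed

lemma exchange_condition:
  assumes j: "j < n - 1" and "a \<in> {1..n}" "a \<in> preceding j" "b \<in> {1..n}" "b \<in> following j"
    and "{p, q} = {l, partner j}" "p < c" "q < c" "a < c'" "b < c'"
  shows "(a < c \<and> p < c') \<or> (q < c' \<and> b < c)"
  using assms partner_spec[OF j] l_le unfolding preceding_def following_def cyclic_rank_def doubleton_eq_iff
  by (auto split: if_splits)

lemma zero_level_triple_vertex:
  assumes "x \<in> {1..n}" "y \<in> {1..n}" "z \<in> {1..n}" "interp_order i x < interp_order i y" "x < z" "y < z"
    and "x \<in> preceding j \<longleftrightarrow> y \<notin> following j"
  shows "triple_vertex n x y z \<in> {v \<in> ordered_vertices n (interp_order i). height j v = 0}"
  using assms by (simp add: triple_vertex_in_ordered_vertices height_triple_vertex)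

lemma midpoint_top_bottom_interp_order:
  assumes j: "j < n - 1" and i: "i \<in> {j, Suc j}"
    and v: "v \<in> ordered_vertices n (interp_order i)" "height j v = 1"
    and v': "v' \<in> ordered_vertices n (interp_order i)" "height j v' = -1"
  shows "(1/2) *\<^sub>R (v + v') \<in> convex hull {z \<in> ordered_vertices n (interp_order i). height j z = 0}"
proof -
  obtain a b c where abc: "v = triple_vertex n a b c" "a \<in> {1..n}" "b \<in> {1..n}" "c \<in> {1..n}"
      "interp_order i a < interp_order i b" "a < c" "b < c"
    using v(1) by (rule ordered_verticesE)
  obtain a' b' c' where abc': "v' = triple_vertex n a' b' c'" "a' \<in> {1..n}" "b' \<in> {1..n}" "c' \<in> {1..n}"
      "interp_order i a' < interp_order i b'" "a' < c'" "b' < c'"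
    using v'(1) by (rule ordered_verticesE)
  have levels: "a \<notin> preceding j" "b \<notin> following j" "a' \<in> preceding j" "b' \<in> following j"
    using v(2) v'(2) abc abc' by (auto simp: height_triple_vertex split: if_splits)
  then have ab: "{a, b} = {l, partner j}"
    using top_level_pair[OF j i abc(2,3,5)] by auto
  then have orders: "interp_order i a' < interp_order i b" "interp_order i a < interp_order i b'"
    using preceding_following_order[OF j i] levels by (auto simp: doubleton_eq_iff)
  consider "a' < c" "a < c'" | "b < c'" "b' < c"
    using exchange_condition[OF j abc'(2) levels(3) abc'(3) levels(4) ab] abc(6,7) abc'(6,7) by blast
  then show ?thesis
  proof cases
    case 1
    then show ?thesis
      using zero_level_triple_vertex[of a' b c i j] zero_level_triple_vertex[of a b' c' i j] abc abc' orders levels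
      by (simp add: triple_vertex_exchange(1) midpoint_in_convex_hull)
  next
    case 2
    then show ?thesis
      using zero_level_triple_vertex[of a' b c' i j] zero_level_triple_vertex[of a b' c i j] abc abc' orders levels
      by (simp add: triple_vertex_exchange(2) midpoint_in_convex_hull)
  qed
qed

lemma balanced_levels_interp_order:
  assumes "j < n - 1" "i \<in> {j, Suc j}"
  shows "balanced_levels (height j) (ordered_vertices n (interp_order i))"
proof -
  have "height j v \<in> {-1, 0, 1}" if "v \<in> ordered_vertices n (interp_order i)" for v
    using that by (rule ordered_verticesE) (auto simp: height_triple_vertex)
  then show ?thesis
    using midpoint_top_bottom_interp_order[OF assms] by (auto simp: balanced_levels_def)
qed

lemma not_preceding_following:
  assumes "j < n - 1"
  shows "l \<notin> preceding j" "l \<notin> following j" "partner j \<notin> preceding j" "partner j \<notin> following j"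
  using partner_spec[OF assms] by (auto simp: preceding_def following_def)

lemma interp_order_l_partner:
  assumes "j < n - 1"
  shows "interp_order j l < interp_order j (partner j)"
    "interp_order (Suc j) (partner j) < interp_order (Suc j) l"
  using partner_spec[OF assms] by (auto simp: interp_order_def)

lemma top_level_interp_order:
  assumes j: "j < n - 1"
  shows "v \<in> ordered_vertices n (interp_order j) \<and> height j v = 1 \<longleftrightarrow>
    (\<exists>c \<in> {1..n}. l < c \<and> partner j < c \<and> v = triple_vertex n l (partner j) c)"
proof
  assume "v \<in> ordered_vertices n (interp_order j) \<and> height j v = 1"
  then obtain a b c where abc: "v = triple_vertex n a b c" "a \<in> {1..n}" "b \<in> {1..n}" "c \<in> {1..n}"
      "interp_order j a < interp_order j b" "a < c" "b < c" "height j v = 1"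
    by (auto simp: ordered_vertices_def)
  then have "a \<notin> preceding j" "b \<notin> following j"
    by (auto simp: height_triple_vertex split: if_splits)
  then have "a = l" "b = partner j"
    using top_level_pair[of j j a b] j abc(2,3,5) interp_order_l_partner[OF j] by auto
  then show "\<exists>c \<in> {1..n}. l < c \<and> partner j < c \<and> v = triple_vertex n l (partner j) c"
    using abc by blast
next
  assume "\<exists>c \<in> {1..n}. l < c \<and> partner j < c \<and> v = triple_vertex n l (partner j) c"
  then obtain c where c: "c \<in> {1..n}" "l < c" "partner j < c" "v = triple_vertex n l (partner j) c"
    by blast
  then have "v \<in> ordered_vertices n (interp_order j)"
    using l_range partner_spec[OF j] interp_order_l_partner[OF j]
    unfolding ordered_vertices_def by blast
  moreover have "height j v = 1"
    using c l_range partner_spec[OF j] not_preceding_following[OF j] by (simp add: height_triple_vertex)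
  ultimately show "v \<in> ordered_vertices n (interp_order j) \<and> height j v = 1" ..
qed

lemma triple_vertex_add_swap_direction:
  "triple_vertex n l (partner j) c + swap_direction j = triple_vertex n (partner j) l c"
  by (simp add: triple_vertex_def swap_direction_def algebra_simps)

lemma level_shift_interp_order_subset:
  assumes j: "j < n - 1"
  shows "level_shift (height j) (swap_direction j) (ordered_vertices n (interp_order j))
    \<subseteq> ordered_vertices n (interp_order (Suc j))"
proof
  fix x assume "x \<in> level_shift (height j) (swap_direction j) (ordered_vertices n (interp_order j))"
  then consider (top) c where "c \<in> {1..n}" "l < c" "partner j < c" "x = triple_vertex n (partner j) l c"
    | (low) "x \<in> ordered_vertices n (interp_order j)" "height j x \<le> 0"
    unfolding level_shift_def using top_level_interp_order[OF j] triple_vertex_add_swap_direction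
    by force
  then show "x \<in> ordered_vertices n (interp_order (Suc j))"
  proof cases
    case top
    then show ?thesis
      using l_range partner_spec[OF j] interp_order_l_partner[OF j]
      unfolding ordered_vertices_def by blast
  next
    case low
    then obtain a b c where abc: "x = triple_vertex n a b c" "a \<in> {1..n}" "b \<in> {1..n}" "c \<in> {1..n}"
        "interp_order j a < interp_order j b" "a < c" "b < c"
      by (auto simp: ordered_vertices_def)
    moreover have "\<not> (a = l \<and> b = partner j)"
      using low(2) abc not_preceding_following[OF j] by (auto simp: height_triple_vertex)
    ultimately show ?thesis
      using interp_order_Suc_less_iff[OF j abc(2,3)] unfolding ordered_vertices_def by blast
  qed
qed

lemma interp_order_Suc_subset_level_shift:
  assumes j: "j < n - 1"
  shows "ordered_vertices n (interp_order (Suc j))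
    \<subseteq> level_shift (height j) (swap_direction j) (ordered_vertices n (interp_order j))"
proof
  fix x assume "x \<in> ordered_vertices n (interp_order (Suc j))"
  then obtain a b c where abc: "x = triple_vertex n a b c" "a \<in> {1..n}" "b \<in> {1..n}" "c \<in> {1..n}"
      "interp_order (Suc j) a < interp_order (Suc j) b" "a < c" "b < c"
    by (auto simp: ordered_vertices_def)
  then consider (kept) "interp_order j a < interp_order j b" "\<not> (a = l \<and> b = partner j)"
    | (swapped) "a = partner j" "b = l"
    using interp_order_Suc_less_iff[OF j] by blast
  then show "x \<in> level_shift (height j) (swap_direction j) (ordered_vertices n (interp_order j))"
  proof cases
    case kept
    then have "x \<in> ordered_vertices n (interp_order j)" using abc unfolding ordered_vertices_def by blast
    moreover have "height j x \<noteq> 1"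
    proof
      assume "height j x = 1"
      then have "a \<notin> preceding j" "b \<notin> following j"
        using abc by (auto simp: height_triple_vertex split: if_splits)
      then show False
        using top_level_pair[of j j a b] j abc(2,3) kept interp_order_l_partner[OF j] by auto
    qed
    moreover have "height j x \<in> {-1, 0, 1}"
      using balanced_levels_interp_order[OF j, of j] calculation(1) by (simp add: balanced_levels_def)
    ultimately show ?thesis by (force simp: level_shift_def)
  next
    case swapped
    then have "x = triple_vertex n l (partner j) c + swap_direction j"
      using abc triple_vertex_add_swap_direction by simp
    moreover have "triple_vertex n l (partner j) c \<in> ordered_vertices n (interp_order j)"
      "height j (triple_vertex n l (partner j) c) = 1"
      using top_level_interp_order[OF j] abc swapped by blast+
    ultimately show ?thesis by (auto simp: level_shift_def)
  qed
qed

lemma level_shift_interp_order: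
  assumes "j < n - 1"
  shows "level_shift (height j) (swap_direction j) (ordered_vertices n (interp_order j))
    = ordered_vertices n (interp_order (Suc j))"
  using level_shift_interp_order_subset[OF assms] interp_order_Suc_subset_level_shift[OF assms] by (rule equalityI)

lemma mutation_sequence_interp_step:
  assumes j: "j < n - 1"
  shows "mutation_sequence (3 * n, convex hull (ordered_vertices n (interp_order j)))
    (3 * n, convex hull (ordered_vertices n (interp_order (Suc j))))"
proof -
  let ?f = "row_indicator n (preceding j) (following j)" and ?w = "swap_direction j"
  \<comment> \<open>the base point of height 0; this is where 3 \<le> l is needed\<close>
  define v0 where "v0 = triple_vertex n 1 2 3"
  note l_m = l_range partner_spec[OF j] not_preceding_following[OF j]
  have ranks: "1 \<noteq> l" "2 \<noteq> l" "cyclic_rank 1 = 1 + n - l" "cyclic_rank 2 = 2 + n - l"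
    using three_le_l by (auto simp: cyclic_rank_def)
  have v0: "v0 \<in> ordered_vertices n (interp_order j)"
    unfolding v0_def ordered_vertices_def using ranks four_le_n l_le
    by (intro CollectI exI[of _ 1] exI[of _ 2] exI[of _ 3]) (auto simp: interp_order_def)
  have height_v0: "height j v0 = 0"
    using ranks four_le_n l_le by (auto simp: v0_def height_triple_vertex preceding_def following_def)
  have f_w: "pair (3 * n) ?f ?w = 0"
    using l_m by (simp add: swap_direction_def pair_add pair_diff pair_mat_unit row_indicator_mat_idx[simplified])
  have w: "primitive (3 * n) ?w"
  proof (rule primitive_if_coordinate_one)
    show "?w \<in> latt (3 * n)"
      unfolding swap_direction_def using l_m by (intro latt_diff latt_add mat_unit_latt) auto
    show "?w (mat_idx n 1 (partner j)) = 1"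
      using l_m by (simp add: swap_direction_def mat_unit_mat_idx)
  qed
  show ?thesis
    unfolding level_shift_interp_order[OF j, symmetric]
    by (rule mutation_sequence_level_shift[where base=v0 and r=1 and f="?f"])
      (simp_all add: ordered_vertices_finite ordered_vertices_latt row_indicator_latt height_def[symmetric]
        v0 height_v0 f_w w balanced_levels_interp_order[OF j] level_shift_interp_order[OF j])
qed

lemma mutation_sequence_interp:
  "j \<le> n - 1 \<Longrightarrow> mutation_sequence (3 * n, convex hull (ordered_vertices n (interp_order 0)))
    (3 * n, convex hull (ordered_vertices n (interp_order j)))"
proof (induction j)
  case 0
  then show ?case by (simp add: mutation_sequence_def)
next
  case (Suc j)
  then show ?case
    using mutation_sequence_interp_step[of j] unfolding mutation_sequence_def by simp
qed

lemma ordered_vertices_interp_first: "ordered_vertices n (interp_order 0) = ordered_vertices n (block_order n (l - 1))"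
  using three_le_l l_le
  by (intro ordered_vertices_cong) (auto simp: interp_order_def cyclic_rank_def block_order_def)

lemma ordered_vertices_interp_last: "ordered_vertices n (interp_order (n - 1)) = ordered_vertices n (block_order n l)"
  using three_le_l l_le
  by (intro ordered_vertices_cong) (auto simp: interp_order_def cyclic_rank_def block_order_def)

end

theorem theorem3p6:
  fixes n l :: nat
  assumes "n \<ge> 4" and "3 \<le> l" and "l \<le> n - 1"
  shows "mutation_sequence (3 * n, mf_polytope n (block_diag (l - 1)))
                           (3 * n, mf_polytope n (block_diag l))"
proof -
  interpret block_interpolation n l
    using assms by unfold_locales
  show ?thesis
    using mutation_sequence_interp[of "n - 1"]
    unfolding mf_polytope_def mf_vertices_block_diag ordered_vertices_interp_first ordered_vertices_interp_last
    by simp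
qed

end
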